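(* In the setting of the context, let $\widehat{df}_\lambda=\mathrm{rank}(\tilde XP)$ and define $\mathcal T=\{j:\|\hat\Theta_j\|_1=\hat\beta^+_j+\hat\beta^-_j\}$, $\mathcal A_\beta=\{j:\hat\beta^+_j-\hat\beta^-_j\ne0\}$, $\mathcal A_\pm=\{j:\hat\beta^\pm_j>0\}$, and $\mathcal A_\Theta=\{(j,k):\hat\Theta_{jk}\ne0,\ j<k\}$. Then almost surely $$\widehat{df}_\lambda\le|\mathcal A_\beta|+|\mathcal A_\Theta|-\big|\mathcal T\cap(\mathcal A_+\Delta\mathcal A_-)\big|,$$ where $\mathcal A_+\Delta\mathcal A_-=(\mathcal A_+\setminus\mathcal A_-)\cup(\mathcal A_-\setminus\mathcal A_+)$.
   Context: $X\in\mathbb{R}^{n\times p}$ with columns $x_j$, $\lambda>0$, $y\sim N(\mu,\sigma^2I_n)$. $(\hat\beta^+,\hat\beta^-,\hat\Theta)$ is a solution of the strong hierarchical lasso with quadratic loss and no ridge penalty: minimize $\frac12\|y-X(\beta^+-\beta^-)-\frac12\sum_{j\ne k}\Theta_{jk}x_j*x_k\|^2+\lambda\mathbf 1^T(\beta^++\beta^-)+\frac\lambda2\sum_{j\ne k}|\Theta_{jk}|$ over $\beta^\pm\in\mathbb{R}^p$, $\Theta\in\mathbb{R}^{p\times p}$ with $\Theta_{jj}=0$, subject to $\Theta=\Theta^T$, $\|\Theta_j\|_1:=\sum_k|\Theta_{jk}|\le\beta^+_j+\beta^-_j$, $\beta^\pm\ge0$. Write it with $\Theta=\Theta^+-\Theta^-$,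 $\Theta^\pm=\max\{\pm\Theta,0\}$, variable $\phi=(\beta^+,\beta^-,\mathrm{vec}(\Theta^+),\mathrm{vec}(\Theta^-))$, $\tilde X=(X,-X,Z/2,-Z/2)$ where $Z\in\mathbb{R}^{n\times p^2}$ has column $(j,k)$ equal to $x_j*x_k$; $D$ is the matrix whose rows encode the inequality constraints $\beta^\pm_j\ge0$, $\beta^+_j+\beta^-_j-\mathbf 1^T(\Theta^+_j+\Theta^-_j)\ge0$, $\Theta^\pm_{jk}\ge0$ ($j\ne k$), and $L$ the matrix whose rows encode $\Theta^\pm_{jj}=0$ and $\Theta^+-\Theta^-=(\Theta^+-\Theta^-)^T$. $P$ is the orthogonal projection onto $\{v:Lv=0,\ D_iv=0 \text{ for all rows } i \text{ with } D_i\hat\phi=0\}$. *)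

theory Defs
  imports "HOL-Analysis.Analysis" "HOL-Probability.Probability"
begin

text \<open>Parameter vector phi = (beta+, beta-, Theta+, Theta-), an element of the
  Euclidean space R^p x R^p x R^(p x p) x R^(p x p) (standard inner product).\<close>
type_synonym 'p phi = "(real^'p) \<times> (real^'p) \<times> (real^'p^'p) \<times> (real^'p^'p)"

definition col :: "real^'p^'n \<Rightarrow> 'p \<Rightarrow> real^'n" where
  "col X j = (\<chi> i. X $ i $ j)"

definition hadam :: "real^'n \<Rightarrow> real^'n \<Rightarrow> real^'n" where
  "hadam u v = (\<chi> i. u $ i * v $ i)"

text \<open>Objective of the strong hierarchical lasso (quadratic loss, no ridge).\<close>
definition shl_obj ::
  "real^'p^'n \<Rightarrow> real^'n \<Rightarrow> real \<Rightarrow> real^'p \<Rightarrow> real^'p \<Rightarrow> real^'p^'p \<Rightarrow> real" where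
  "shl_obj X y lam bp bm Th =
     1/2 * (norm (y - X *v (bp - bm)
        - (1/2) *\<^sub>R (\<Sum>j\<in>UNIV. \<Sum>k\<in>UNIV - {j}. Th $ j $ k *\<^sub>R hadam (col X j) (col X k))))\<^sup>2
     + lam * (\<Sum>j\<in>UNIV. bp $ j + bm $ j)
     + lam / 2 * (\<Sum>j\<in>UNIV. \<Sum>k\<in>UNIV - {j}. \<bar>Th $ j $ k\<bar>)"

definition shl_feasible :: "real^'p \<Rightarrow> real^'p \<Rightarrow> real^'p^'p \<Rightarrow> bool" where
  "shl_feasible bp bm Th \<longleftrightarrow>
     (\<forall>j. Th $ j $ j = 0) \<and> (\<forall>j k. Th $ j $ k = Th $ k $ j) \<and>
     (\<forall>j. (\<Sum>k\<in>UNIV. \<bar>Th $ j $ k\<bar>) \<le> bp $ j + bm $ j) \<and>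
     (\<forall>j. 0 \<le> bp $ j \<and> 0 \<le> bm $ j)"

definition shl_solution ::
  "real^'p^'n \<Rightarrow> real^'n \<Rightarrow> real \<Rightarrow> real^'p \<Rightarrow> real^'p \<Rightarrow> real^'p^'p \<Rightarrow> bool" where
  "shl_solution X y lam bp bm Th \<longleftrightarrow> shl_feasible bp bm Th \<and>
     (\<forall>bp' bm' Th'. shl_feasible bp' bm' Th' \<longrightarrow>
        shl_obj X y lam bp bm Th \<le> shl_obj X y lam bp' bm' Th')"

definition phi_of :: "real^'p \<Rightarrow> real^'p \<Rightarrow> real^'p^'p \<Rightarrow> 'p phi" where
  "phi_of bp bm Th = (bp, bm, \<chi> j k. max (Th $ j $ k) 0, \<chi> j k. max (- Th $ j $ k) 0)"

text \<open>The linear map Xtilde = (X, -X, Z/2, -Z/2); column (j,k) of Z is x_j * x_k.\<close>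
definition Xtilde :: "real^'p^'n \<Rightarrow> 'p phi \<Rightarrow> real^'n" where
  "Xtilde X v = (case v of (bp, bm, Tp, Tm) \<Rightarrow>
     X *v bp - X *v bm
     + (1/2) *\<^sub>R (\<Sum>j\<in>UNIV. \<Sum>k\<in>UNIV. Tp $ j $ k *\<^sub>R hadam (col X j) (col X k))
     - (1/2) *\<^sub>R (\<Sum>j\<in>UNIV. \<Sum>k\<in>UNIV. Tm $ j $ k *\<^sub>R hadam (col X j) (col X k)))"

text \<open>The subspace {v. L v = 0, D_i v = 0 for all rows i active at phi}.\<close>
definition active_space :: "('p::finite) phi \<Rightarrow> 'p phi set" where
  "active_space ph = (case ph of (bp, bm, Tp, Tm) \<Rightarrow>
     {(vbp, vbm, vTp, vTm).
        (\<forall>j. vTp $ j $ j = 0 \<and> vTm $ j $ j = 0) \<and>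
        (\<forall>j k. vTp $ j $ k - vTm $ j $ k = vTp $ k $ j - vTm $ k $ j) \<and>
        (\<forall>j. bp $ j = 0 \<longrightarrow> vbp $ j = 0) \<and>
        (\<forall>j. bm $ j = 0 \<longrightarrow> vbm $ j = 0) \<and>
        (\<forall>j. bp $ j + bm $ j - (\<Sum>k\<in>UNIV. Tp $ j $ k + Tm $ j $ k) = 0 \<longrightarrow>
              vbp $ j + vbm $ j - (\<Sum>k\<in>UNIV. vTp $ j $ k + vTm $ j $ k) = 0) \<and>
        (\<forall>j k. j \<noteq> k \<longrightarrow> Tp $ j $ k = 0 \<longrightarrow> vTp $ j $ k = 0) \<and>
        (\<forall>j k. j \<noteq> k \<longrightarrow> Tm $ j $ k = 0 \<longrightarrow> vTm $ j $ k = 0)})"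

definition orth_proj :: "'a::real_inner set \<Rightarrow> 'a \<Rightarrow> 'a" where
  "orth_proj V v = (THE w. w \<in> V \<and> (\<forall>u\<in>V. inner (v - w) u = 0))"

definition gauss_law :: "real^'n \<Rightarrow> real \<Rightarrow> (real^'n) measure" where
  "gauss_law mu sg = density lborel (\<lambda>y. ennreal (\<Prod>i\<in>UNIV. normal_density (mu $ i) sg (y $ i)))"

end

theory Submission
  imports Defs
begin

text \<open>Let V be the active subspace at a solution \<open>\<phi>\<close> and pen the (linear) penalty, so that
  stationarity along V reads \<open>\<langle>y - X\<phi>, Xw\<rangle> = \<lambda> pen w\<close> for all \<open>w \<in> V\<close> (X standing for the
  design map Xtilde). Let \<open>U \<subseteq> V\<close> additionally tie the directions of \<open>\<beta>\<^sup>+\<^sub>j\<close> and \<open>\<beta>\<^sup>-\<^sub>j\<close>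
  wherever \<open>\<beta>\<^sup>+\<^sub>j = \<beta>\<^sup>-\<^sub>j > 0\<close>; then \<open>\<phi> \<in> U\<close>. If \<open>X V \<noteq> X U\<close>, some \<open>w \<in> V\<close> has \<open>Xw \<noteq> 0\<close>
  orthogonal to \<open>X U\<close>, hence to \<open>X\<phi>\<close>, and y lies on the hyperplane \<open>\<langle>Xw, y\<rangle> = \<lambda> pen w\<close>.
  That hyperplane depends only on the pattern of active constraints at \<open>\<phi>\<close>, and there are
  finitely many patterns, so almost surely the range of XP is \<open>X U\<close>. Finally U embeds into the
  coordinates \<open>\<beta>\<^sub>j\<close>, \<open>j \<in> \<A>\<^sub>\<beta> - \<T> \<inter> (\<A>\<^sub>+ \<Delta> \<A>\<^sub>-)\<close>, and \<open>\<Theta>\<^sub>j\<^sub>k\<close>, \<open>(j, k) \<in> \<A>\<^sub>\<Theta>\<close>: on a tight row with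
  exactly one positive sign the hierarchy constraint determines the remaining \<open>\<beta>\<close>-coordinate from
  \<open>\<Theta>\<close>, and a row where both signs are positive is always tight.\<close>

lemma linear_Xtilde:
  fixes X :: "real^'p::finite^'n"
  shows "linear (Xtilde X)"
proof (rule linearI)
  fix u v :: "'p::finite phi" and c :: real
  show "Xtilde X (u + v) = Xtilde X u + Xtilde X v"
    by (cases u; cases v)
      (simp add: Xtilde_def algebra_simps sum.distrib)
  show "Xtilde X (c *\<^sub>R u) = c *\<^sub>R Xtilde X u"
    by (cases u) (simp add: Xtilde_def algebra_simps scaleR_sum_right)
qed

definition shl_fit :: "real^'p^'n \<Rightarrow> real^'p \<Rightarrow> real^'p \<Rightarrow> real^'p^'p \<Rightarrow> real^'n" where
  "shl_fit X bp bm Th = X *v (bp - bm)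
     + (1/2) *\<^sub>R (\<Sum>j\<in>UNIV. \<Sum>k\<in>UNIV - {j}. Th $ j $ k *\<^sub>R hadam (col X j) (col X k))"

lemma shl_obj_eq:
  "shl_obj X y lam bp bm Th = 1/2 * (norm (y - shl_fit X bp bm Th))\<^sup>2
     + lam * (\<Sum>j\<in>UNIV. bp $ j + bm $ j)
     + lam / 2 * (\<Sum>j\<in>UNIV. \<Sum>k\<in>UNIV - {j}. \<bar>Th $ j $ k\<bar>)"
  by (simp add: shl_obj_def shl_fit_def algebra_simps)

lemma shl_fit_affine:
  "shl_fit X (bp + t *\<^sub>R a) (bm + t *\<^sub>R b) (Th + t *\<^sub>R E)
     = shl_fit X bp bm Th + t *\<^sub>R shl_fit X a b E"
  by (simp add: shl_fit_def scaleR_sum_right sum.distrib algebra_simps)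

lemma Xtilde_eq_shl_fit:
  fixes X :: "real^'p::finite^'n"
  assumes "\<And>j. Tp $ j $ j = Tm $ j $ j"
  shows "Xtilde X (bp, bm, Tp, Tm) = shl_fit X bp bm (Tp - Tm)"
proof -
  have "(\<Sum>k\<in>UNIV. (Tp - Tm) $ j $ k *\<^sub>R hadam (col X j) (col X k))
      = (\<Sum>k\<in>UNIV - {j}. (Tp - Tm) $ j $ k *\<^sub>R hadam (col X j) (col X k))" for j
    using assms[of j] by (simp add: sum.remove[of UNIV j])
  then have "(1/2) *\<^sub>R (\<Sum>j\<in>UNIV. \<Sum>k\<in>UNIV. Tp $ j $ k *\<^sub>R hadam (col X j) (col X k))
     - (1/2) *\<^sub>R (\<Sum>j\<in>UNIV. \<Sum>k\<in>UNIV. Tm $ j $ k *\<^sub>R hadam (col X j) (col X k))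
     = (1/2) *\<^sub>R (\<Sum>j\<in>UNIV. \<Sum>k\<in>UNIV - {j}. (Tp - Tm) $ j $ k *\<^sub>R hadam (col X j) (col X k))"
    by (simp add: scaleR_diff_right[symmetric] sum_subtractf[symmetric] scaleR_diff_left)
  then show ?thesis
    by (simp add: Xtilde_def shl_fit_def matrix_vector_right_distrib[symmetric] algebra_simps)
qed

lemma Xtilde_phi_of:
  fixes X :: "real^'p::finite^'n"
  assumes "\<And>j. Th $ j $ j = 0"
  shows "Xtilde X (phi_of bp bm Th) = shl_fit X bp bm Th"
proof -
  have "(\<chi> j k. max (Th $ j $ k) 0) - (\<chi> j k. max (- Th $ j $ k) 0) = Th"
    by (simp add: vec_eq_iff max_def)
  then show ?thesis
    unfolding phi_of_def by (subst Xtilde_eq_shl_fit) (simp_all add: assms)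
qed

text \<open>A pattern records the constraints active at a point: the zero sets of \<open>\<beta>\<^sup>+\<close> and \<open>\<beta>\<^sup>-\<close>,
  the tight hierarchy rows, the sign pattern of \<open>\<Theta>\<close>, and the ties \<open>\<beta>\<^sup>+\<^sub>j = \<beta>\<^sup>-\<^sub>j > 0\<close>.
  There are only finitely many patterns.\<close>

type_synonym 'p pattern =
  "'p set \<times> 'p set \<times> 'p set \<times> ('p \<times> 'p) set \<times> ('p \<times> 'p) set \<times> 'p set"

definition active_pattern :: "real^'p \<Rightarrow> real^'p \<Rightarrow> real^'p^'p \<Rightarrow> ('p::finite) pattern" where
  "active_pattern bp bm Th =
     ({j. bp $ j = 0}, {j. bm $ j = 0}, {j. (\<Sum>k\<in>UNIV. \<bar>Th $ j $ k\<bar>) = bp $ j + bm $ j},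
      {(j, k). Th $ j $ k \<le> 0}, {(j, k). 0 \<le> Th $ j $ k}, {j. 0 < bp $ j \<and> bp $ j = bm $ j})"

definition pattern_space :: "('p::finite) pattern \<Rightarrow> 'p phi set" where
  "pattern_space pt = (case pt of (Zp, Zm, T, Np, Nm, _) \<Rightarrow>
     {(a, b, C, D).
        (\<forall>j. C $ j $ j = 0 \<and> D $ j $ j = 0) \<and>
        (\<forall>j k. C $ j $ k - D $ j $ k = C $ k $ j - D $ k $ j) \<and>
        (\<forall>j\<in>Zp. a $ j = 0) \<and> (\<forall>j\<in>Zm. b $ j = 0) \<and>
        (\<forall>j\<in>T. a $ j + b $ j = (\<Sum>k\<in>UNIV. C $ j $ k + D $ j $ k)) \<and>
        (\<forall>(j, k)\<in>Np. j \<noteq> k \<longrightarrow> C $ j $ k = 0) \<and>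
        (\<forall>(j, k)\<in>Nm. j \<noteq> k \<longrightarrow> D $ j $ k = 0)})"

lemma active_space_eq_pattern_space:
  "active_space (phi_of bp bm Th) = pattern_space (active_pattern bp bm Th)"
proof -
  have "max x 0 + max (- x) 0 = \<bar>x\<bar>" for x :: real
    by (simp add: max_def)
  then have "(\<Sum>k\<in>UNIV. max (Th $ j $ k) 0 + max (- Th $ j $ k) 0) = (\<Sum>k\<in>UNIV. \<bar>Th $ j $ k\<bar>)" for j
    by simp
  then show ?thesis
    unfolding active_space_def phi_of_def pattern_space_def active_pattern_def
    by (auto simp: max_def algebra_simps)
qed

text \<open>The penalty term of shl_obj at \<open>phi_of bp bm Th\<close> is \<open>lam * lin_penalty (phi_of bp bm Th)\<close>.\<close>

definition lin_penalty :: "('p::finite) phi \<Rightarrow> real" where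
  "lin_penalty v = (case v of (a, b, C, D) \<Rightarrow>
     (\<Sum>j\<in>UNIV. a $ j + b $ j) + 1/2 * (\<Sum>j\<in>UNIV. \<Sum>k\<in>UNIV - {j}. C $ j $ k + D $ j $ k))"

lemma eventually_pos_affine:
  assumes "(c::real) > 0"
  shows "eventually (\<lambda>t. 0 < c + t * d) (nhds 0)"
proof -
  have "((\<lambda>t. c + t * d) \<longlongrightarrow> c + 0 * d) (nhds 0)"
    by (intro tendsto_intros) (simp add: tendsto_ident_at filterlim_ident)
  then show ?thesis
    using assms by (auto dest: order_tendstoD(1))
qed

lemma eventually_nonneg_affine:
  assumes "0 \<le> (c::real)" and "c = 0 \<Longrightarrow> d = 0"
  shows "eventually (\<lambda>t. 0 \<le> c + t * d) (nhds 0)"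
proof (cases "c = 0")
  case False
  with assms(1) have "c > 0" by simp
  from eventually_pos_affine[OF this, of d] show ?thesis
    by eventually_elim simp
qed (use assms in simp)

lemma eventually_abs_affine:
  assumes "(c::real) \<noteq> 0"
  shows "eventually (\<lambda>t. \<bar>c + t * d\<bar> = \<bar>c\<bar> + t * (sgn c * d)) (nhds 0)"
proof (cases "c > 0")
  case True
  from eventually_pos_affine[OF this, of d] show ?thesis
    by eventually_elim (use True in simp)
next
  case False
  with assms have "- c > 0" by simp
  from eventually_pos_affine[OF this, of "- d"] show ?thesis
    by eventually_elim (use False assms in \<open>simp add: sgn_if\<close>)
qed

lemma active_direction_abs:
  assumes diag: "\<And>j. Th $ j $ j = 0"
    and v: "(a, b, C, D) \<in> pattern_space (active_pattern bp bm Th)"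
  shows "eventually (\<lambda>t. \<forall>j k. \<bar>(Th + t *\<^sub>R (C - D)) $ j $ k\<bar>
                              = \<bar>Th $ j $ k\<bar> + t * (C $ j $ k + D $ j $ k)) (nhds 0)"
proof -
  have "eventually (\<lambda>t. \<bar>Th $ j $ k + t * (C $ j $ k - D $ j $ k)\<bar>
                        = \<bar>Th $ j $ k\<bar> + t * (C $ j $ k + D $ j $ k)) (nhds 0)" for j k
  proof (cases "j = k \<or> Th $ j $ k = 0")
    case True
    with diag have "Th $ j $ k = 0" by auto
    moreover from v this have "C $ j $ k = 0" "D $ j $ k = 0"
      by (cases "j = k"; auto simp: pattern_space_def active_pattern_def)+
    ultimately show ?thesis by simp
  next
    case False
    with v have "sgn (Th $ j $ k) * (C $ j $ k - D $ j $ k) = C $ j $ k + D $ j $ k"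
      by (auto simp: pattern_space_def active_pattern_def sgn_if)
    with eventually_abs_affine[of "Th $ j $ k" "C $ j $ k - D $ j $ k"] False show ?thesis
      by simp
  qed
  then show ?thesis
    by (intro eventually_all_finite) simp
qed

lemma active_direction_feasible:
  assumes feas: "shl_feasible bp bm Th"
    and v: "(a, b, C, D) \<in> pattern_space (active_pattern bp bm Th)"
  shows "eventually (\<lambda>t. shl_feasible (bp + t *\<^sub>R a) (bm + t *\<^sub>R b) (Th + t *\<^sub>R (C - D))) (nhds 0)"
proof -
  have diag: "\<And>j. Th $ j $ j = 0" and sym: "\<And>j k. Th $ j $ k = Th $ k $ j"
    and hier: "\<And>j. (\<Sum>k\<in>UNIV. \<bar>Th $ j $ k\<bar>) \<le> bp $ j + bm $ j"
    and nonneg: "\<And>j. 0 \<le> bp $ j" "\<And>j. 0 \<le> bm $ j"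
    using feas by (auto simp: shl_feasible_def)
  have vdiag: "\<And>j. C $ j $ j = 0 \<and> D $ j $ j = 0"
    and vsym: "\<And>j k. C $ j $ k - D $ j $ k = C $ k $ j - D $ k $ j"
    and tight: "\<And>j. (\<Sum>k\<in>UNIV. \<bar>Th $ j $ k\<bar>) = bp $ j + bm $ j \<Longrightarrow>
                     a $ j + b $ j = (\<Sum>k\<in>UNIV. C $ j $ k + D $ j $ k)"
    and a0: "\<And>j. bp $ j = 0 \<Longrightarrow> a $ j = 0" and b0: "\<And>j. bm $ j = 0 \<Longrightarrow> b $ j = 0"
    using v by (auto simp: pattern_space_def active_pattern_def)
  define s where "s j = bp $ j + bm $ j - (\<Sum>k\<in>UNIV. \<bar>Th $ j $ k\<bar>)" for j
  define ds where "ds j = a $ j + b $ j - (\<Sum>k\<in>UNIV. C $ j $ k + D $ j $ k)" for j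
  have "eventually (\<lambda>t. \<forall>j. 0 \<le> bp $ j + t * a $ j \<and> 0 \<le> bm $ j + t * b $ j
                          \<and> 0 \<le> s j + t * ds j) (nhds 0)"
    using hier by (intro eventually_all_finite eventually_conj eventually_nonneg_affine)
      (auto simp: nonneg a0 b0 s_def ds_def tight)
  with active_direction_abs[OF diag v] show ?thesis
  proof eventually_elim
    case (elim t)
    have "(\<Sum>k\<in>UNIV. \<bar>(Th + t *\<^sub>R (C - D)) $ j $ k\<bar>)
        = (\<Sum>k\<in>UNIV. \<bar>Th $ j $ k\<bar>) + t * (\<Sum>k\<in>UNIV. C $ j $ k + D $ j $ k)" for j
      using elim(1) by (simp add: sum.distrib sum_distrib_left[symmetric])
    moreover have "t * (C $ j $ k - D $ j $ k) = t * (C $ k $ j - D $ k $ j)" for j k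
      using vsym by simp
    ultimately show ?case
      using elim(2) diag sym vdiag
      by (auto simp: shl_feasible_def s_def ds_def algebra_simps)
  qed
qed

lemma shl_obj_along_direction:
  fixes X :: "real^'p::finite^'n" and y :: "real^'n" and bp bm a b :: "real^'p"
    and Th C D :: "real^'p^'p"
  assumes diag: "\<And>j. Th $ j $ j = 0" "\<And>j. C $ j $ j = 0" "\<And>j. D $ j $ j = 0"
    and abs: "\<And>j k. \<bar>(Th + t *\<^sub>R (C - D)) $ j $ k\<bar> = \<bar>Th $ j $ k\<bar> + t * (C $ j $ k + D $ j $ k)"
  defines "r \<equiv> y - Xtilde X (phi_of bp bm Th)" and "m \<equiv> Xtilde X (a, b, C, D)"
  shows "shl_obj X y lam (bp + t *\<^sub>R a) (bm + t *\<^sub>R b) (Th + t *\<^sub>R (C - D))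
     = shl_obj X y lam bp bm Th + t * (lam * lin_penalty (a, b, C, D) - inner r m)
       + t\<^sup>2 * (inner m m / 2)"
proof -
  have fit: "y - shl_fit X (bp + t *\<^sub>R a) (bm + t *\<^sub>R b) (Th + t *\<^sub>R (C - D)) = r - t *\<^sub>R m"
    by (simp add: r_def m_def shl_fit_affine Xtilde_phi_of Xtilde_eq_shl_fit diag)
  have "(norm (r - t *\<^sub>R m))\<^sup>2 = (norm r)\<^sup>2 - 2 * t * inner r m + t\<^sup>2 * inner m m"
    unfolding power2_norm_eq_inner by (simp add: inner_diff_left inner_diff_right inner_commute
        power2_eq_square algebra_simps)
  moreover have "(\<Sum>j\<in>UNIV. (bp + t *\<^sub>R a) $ j + (bm + t *\<^sub>R b) $ j)
      = (\<Sum>j\<in>UNIV. bp $ j + bm $ j) + t * (\<Sum>j\<in>UNIV. a $ j + b $ j)"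
    by (simp add: sum.distrib sum_distrib_left algebra_simps)
  moreover have "(\<Sum>j\<in>UNIV. \<Sum>k\<in>UNIV - {j}. \<bar>(Th + t *\<^sub>R (C - D)) $ j $ k\<bar>)
      = (\<Sum>j\<in>UNIV. \<Sum>k\<in>UNIV - {j}. \<bar>Th $ j $ k\<bar>)
        + t * (\<Sum>j\<in>UNIV. \<Sum>k\<in>UNIV - {j}. C $ j $ k + D $ j $ k)"
    unfolding abs by (simp add: sum.distrib sum_distrib_left[symmetric])
  moreover have "y - shl_fit X bp bm Th = r"
    by (simp add: r_def Xtilde_phi_of diag)
  ultimately show ?thesis
    unfolding shl_obj_eq fit lin_penalty_def prod.case by (simp add: algebra_simps)
qed

lemma shl_stationarity:
  fixes X :: "real^'p::finite^'n"
  assumes sol: "shl_solution X y lam bp bm Th"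
    and v: "v \<in> pattern_space (active_pattern bp bm Th)"
  shows "inner (y - Xtilde X (phi_of bp bm Th)) (Xtilde X v) = lam * lin_penalty v"
proof -
  obtain a b C D where v_eq: "v = (a, b, C, D)"
    by (cases v)
  have feas: "shl_feasible bp bm Th"
    using sol by (simp add: shl_solution_def)
  then have diag: "\<And>j. Th $ j $ j = 0"
    by (simp add: shl_feasible_def)
  have vdiag: "\<And>j. C $ j $ j = 0" "\<And>j. D $ j $ j = 0"
    using v by (simp_all add: v_eq pattern_space_def active_pattern_def)
  define r where "r = y - Xtilde X (phi_of bp bm Th)"
  define m where "m = Xtilde X v"
  define g where "g t = t * (lam * lin_penalty v - inner r m) + t\<^sup>2 * (inner m m / 2)" for t
  have "eventually (\<lambda>t. g 0 \<le> g t) (nhds 0)"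
    using active_direction_feasible[OF feas v[unfolded v_eq]] active_direction_abs[OF diag v[unfolded v_eq]]
  proof eventually_elim
    case (elim t)
    then have "shl_obj X y lam bp bm Th
        \<le> shl_obj X y lam (bp + t *\<^sub>R a) (bm + t *\<^sub>R b) (Th + t *\<^sub>R (C - D))"
      using sol by (simp add: shl_solution_def)
    also have "\<dots> = shl_obj X y lam bp bm Th + g t"
      using elim(2) by (simp add: shl_obj_along_direction diag vdiag g_def r_def m_def v_eq)
    finally show ?case
      by (simp add: g_def)
  qed
  then obtain d where "d > 0" "\<forall>t. \<bar>0 - t\<bar> < d \<longrightarrow> g 0 \<le> g t"
    unfolding eventually_nhds_metric dist_real_def by auto
  moreover have "DERIV g 0 :> lam * lin_penalty v - inner r m"
    unfolding g_def by (auto intro!: derivative_eq_intros)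
  ultimately have "lam * lin_penalty v - inner r m = 0"
    using DERIV_local_min by blast
  then show ?thesis
    by (simp add: r_def m_def)
qed

lemma shl_solution_hierarchy_tight:
  fixes X :: "real^'p::finite^'n"
  assumes sol: "shl_solution X y lam bp bm Th" and lam: "lam > 0"
    and pos: "0 < bp $ j" "0 < bm $ j"
  shows "(\<Sum>k\<in>UNIV. \<bar>Th $ j $ k\<bar>) = bp $ j + bm $ j"
proof (rule ccontr)
  assume slack: "(\<Sum>k\<in>UNIV. \<bar>Th $ j $ k\<bar>) \<noteq> bp $ j + bm $ j"
  have feas: "shl_feasible bp bm Th"
    using sol by (simp add: shl_solution_def)
  then have hier: "\<And>i. (\<Sum>k\<in>UNIV. \<bar>Th $ i $ k\<bar>) \<le> bp $ i + bm $ i"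
    and nonneg: "\<And>i. 0 \<le> bp $ i" "\<And>i. 0 \<le> bm $ i"
    by (simp_all add: shl_feasible_def)
  \<comment> \<open>Lowering both bp j and bm j by eps keeps the fit and the constraints but lowers the penalty.\<close>
  define eps where
    "eps = min (min (bp $ j) (bm $ j)) ((bp $ j + bm $ j - (\<Sum>k\<in>UNIV. \<bar>Th $ j $ k\<bar>)) / 2)"
  have eps: "eps > 0" and eps_le: "2 * eps \<le> bp $ j + bm $ j - (\<Sum>k\<in>UNIV. \<bar>Th $ j $ k\<bar>)"
    using pos slack hier[of j] by (auto simp: eps_def min_def)
  define e where "e = (axis j eps :: real^'p)"
  have "shl_feasible (bp - e) (bm - e) Th"
    unfolding shl_feasible_def
  proof (intro conjI allI)
    fix i
    show "(\<Sum>k\<in>UNIV. \<bar>Th $ i $ k\<bar>) \<le> (bp - e) $ i + (bm - e) $ i"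
      using hier[of i] eps_le by (cases "i = j") (auto simp: e_def axis_def)
    show "0 \<le> (bp - e) $ i" "0 \<le> (bm - e) $ i"
      using nonneg[of i] by (cases "i = j"; auto simp: e_def axis_def eps_def)+
  qed (use feas in \<open>auto simp: shl_feasible_def\<close>)
  then have "shl_obj X y lam bp bm Th \<le> shl_obj X y lam (bp - e) (bm - e) Th"
    using sol by (simp add: shl_solution_def)
  moreover have pen: "(\<Sum>i\<in>UNIV. (bp - e) $ i + (bm - e) $ i) = (\<Sum>i\<in>UNIV. bp $ i + bm $ i) - 2 * eps"
    by (simp add: e_def sum.distrib sum_subtractf axis_def sum_distrib_left[symmetric])
  moreover have fit: "shl_fit X (bp - e) (bm - e) Th = shl_fit X bp bm Th"
    by (simp add: shl_fit_def)
  ultimately have "shl_obj X y lam bp bm Th \<le> shl_obj X y lam bp bm Th - 2 * lam * eps"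
    unfolding shl_obj_eq pen fit by (simp add: algebra_simps)
  then show False
    using mult_pos_pos[OF lam eps] by (simp add: mult.commute)
qed

definition tied_space :: "('p::finite) pattern \<Rightarrow> 'p phi set" where
  "tied_space pt = pattern_space pt \<inter>
     (case pt of (_, _, _, _, _, E) \<Rightarrow> {(a, b, C, D). \<forall>j\<in>E. a $ j = b $ j})"

lemma subspace_pattern_space: "subspace (pattern_space pt)"
  unfolding subspace_def pattern_space_def
  by (auto simp: zero_prod_def algebra_simps sum.distrib sum_distrib_left[symmetric]
      split: prod.splits) (metis distrib_left)+

lemma subspace_tied_space: "subspace (tied_space pt)"
proof -
  have "subspace (case pt of (_, _, _, _, _, E) \<Rightarrow>
      {(a, b, C, D :: real^'a^'a). \<forall>j\<in>E. a $ j = (b::real^'a) $ j})"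
    unfolding subspace_def by (auto simp: zero_prod_def split: prod.splits)
  then show ?thesis
    unfolding tied_space_def using subspace_pattern_space by (rule subspace_inter[rotated])
qed

lemma tied_space_subset: "tied_space pt \<subseteq> pattern_space pt"
  by (simp add: tied_space_def)

lemma phi_of_mem_tied_space:
  assumes "shl_feasible bp bm Th"
  shows "phi_of bp bm Th \<in> tied_space (active_pattern bp bm Th)"
proof -
  have "phi_of bp bm Th \<in> active_space (phi_of bp bm Th)"
    using assms by (auto simp: active_space_def phi_of_def shl_feasible_def max_def)
  then show ?thesis
    by (simp add: tied_space_def active_space_eq_pattern_space) (simp add: phi_of_def active_pattern_def)
qed

lemma linear_image_orthogonal_direction:
  fixes f :: "'a::real_vector \<Rightarrow> 'b::euclidean_space"
  assumes f: "linear f" and U: "subspace U" and V: "subspace V" and "U \<subseteq> V"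
    and not_subset: "\<not> f ` V \<subseteq> f ` U"
  obtains w where "w \<in> V" "f w \<noteq> 0" "\<And>u. u \<in> U \<Longrightarrow> inner (f w) (f u) = 0"
proof -
  obtain v where v: "v \<in> V" and fv: "f v \<notin> f ` U"
    using not_subset by blast
  have span_fU: "span (f ` U) = f ` U"
    using linear_subspace_image[OF f U] by (simp add: span_eq_iff)
  obtain p z where p: "p \<in> span (f ` U)" and z: "\<And>q. q \<in> span (f ` U) \<Longrightarrow> orthogonal z q"
      and decomp: "f v = p + z"
    using orthogonal_subspace_decomp_exists by blast
  then obtain u where u: "u \<in> U" and "p = f u"
    using span_fU by auto
  then have z_eq: "z = f (v - u)"
    using decomp linear_diff[OF f, of v u] by simp
  show ?thesis
  proof
    show "v - u \<in> V"
      using v u \<open>U \<subseteq> V\<close> V subspace_diff by blast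
    show "f (v - u) \<noteq> 0"
      using fv u decomp \<open>p = f u\<close> z_eq by auto
    show "inner (f (v - u)) (f u') = 0" if "u' \<in> U" for u'
      using z[of "f u'"] that span_fU z_eq by (simp add: orthogonal_def)
  qed
qed

definition separating_direction :: "real^'p^'n \<Rightarrow> ('p::finite) pattern \<Rightarrow> 'p phi \<Rightarrow> bool" where
  "separating_direction X pt w \<longleftrightarrow> w \<in> pattern_space pt \<and> Xtilde X w \<noteq> 0 \<and>
     (\<forall>u\<in>tied_space pt. inner (Xtilde X w) (Xtilde X u) = 0)"

text \<open>The direction w depends on the pattern only, not on y; by stationarity, a solution with active
  pattern pt forces y onto this hyperplane as soon as some separating direction exists.\<close>

definition exceptional_set :: "real^'p^'n \<Rightarrow> real \<Rightarrow> ('p::finite) pattern \<Rightarrow> (real^'n) set" where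
  "exceptional_set X lam pt =
     (if \<exists>w. separating_direction X pt w
      then (let w = SOME w. separating_direction X pt w in {y. inner (Xtilde X w) y = lam * lin_penalty w})
      else {})"

lemma image_pattern_space_subset:
  fixes X :: "real^'p::finite^'n"
  assumes sol: "shl_solution X y lam bp bm Th"
    and y: "y \<notin> exceptional_set X lam (active_pattern bp bm Th)"
  shows "Xtilde X ` pattern_space (active_pattern bp bm Th) \<subseteq> Xtilde X ` tied_space (active_pattern bp bm Th)"
proof (rule ccontr)
  define pt where "pt = active_pattern bp bm Th"
  assume "\<not> ?thesis"
  then have "\<exists>w. separating_direction X pt w"
    using linear_image_orthogonal_direction[OF linear_Xtilde subspace_tied_space subspace_pattern_space
        tied_space_subset]
    unfolding separating_direction_def pt_def by metis
  then obtain w where w: "separating_direction X pt w"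
    and exc: "exceptional_set X lam pt = {y. inner (Xtilde X w) y = lam * lin_penalty w}"
    unfolding exceptional_set_def Let_def by (metis someI_ex)
  have "phi_of bp bm Th \<in> tied_space pt"
    using sol by (simp add: pt_def shl_solution_def phi_of_mem_tied_space)
  then have "inner (Xtilde X w) (Xtilde X (phi_of bp bm Th)) = 0"
    using w by (simp add: separating_direction_def)
  moreover have "inner (y - Xtilde X (phi_of bp bm Th)) (Xtilde X w) = lam * lin_penalty w"
    using w sol by (simp add: separating_direction_def shl_stationarity pt_def)
  ultimately have "y \<in> exceptional_set X lam pt"
    by (simp add: exc inner_diff_right inner_commute)
  then show False
    using y by (simp add: pt_def)
qed

lemma tied_space_Theta_eq_0:
  fixes j k :: "'p::{finite,linorder}"
  assumes feas: "shl_feasible bp bm Th"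
    and v: "(a, b, C, D) \<in> tied_space (active_pattern bp bm Th)"
    and net: "\<And>j k. Th $ j $ k \<noteq> 0 \<Longrightarrow> j < k \<Longrightarrow> C $ j $ k = D $ j $ k"
  shows "C $ j $ k = 0 \<and> D $ j $ k = 0"
proof -
  have sym: "Th $ j $ k = Th $ k $ j"
    using feas by (simp add: shl_feasible_def)
  have vdiag: "C $ j $ j = 0" "D $ j $ j = 0"
    and vsym: "C $ j $ k - D $ j $ k = C $ k $ j - D $ k $ j"
    and vC: "j \<noteq> k \<Longrightarrow> Th $ j $ k \<le> 0 \<Longrightarrow> C $ j $ k = 0"
    and vD: "j \<noteq> k \<Longrightarrow> 0 \<le> Th $ j $ k \<Longrightarrow> D $ j $ k = 0"
    using v by (auto simp: tied_space_def pattern_space_def active_pattern_def)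
  consider "j = k" | "j \<noteq> k" "Th $ j $ k = 0" | "j \<noteq> k" "Th $ j $ k \<noteq> 0"
    by blast
  then show ?thesis
  proof cases
    case 3
    have "C $ j $ k = D $ j $ k"
    proof (cases "j < k")
      case False
      with 3 have "C $ k $ j = D $ k $ j"
        using net[of k j] sym by auto
      with vsym show ?thesis by simp
    qed (use 3 net in simp)
    with 3 vC vD show ?thesis
      by (cases "Th $ j $ k \<le> 0") auto
  qed (use vdiag vC vD in auto)
qed

lemma tied_space_beta_eq_0:
  fixes X :: "real^'p::finite^'n"
  assumes sol: "shl_solution X y lam bp bm Th" and lam: "lam > 0"
    and v: "(a, b, 0, 0) \<in> tied_space (active_pattern bp bm Th)"
    and net: "bp $ j \<noteq> bm $ j \<Longrightarrow>
              ((\<Sum>k\<in>UNIV. \<bar>Th $ j $ k\<bar>) = bp $ j + bm $ j \<longrightarrow> (0 < bp $ j \<longleftrightarrow> 0 < bm $ j)) \<Longrightarrow>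
              a $ j = b $ j"
  shows "a $ j = 0 \<and> b $ j = 0"
proof -
  have nonneg: "0 \<le> bp $ j" "0 \<le> bm $ j"
    using sol by (simp_all add: shl_solution_def shl_feasible_def)
  have a0: "bp $ j = 0 \<Longrightarrow> a $ j = 0" and b0: "bm $ j = 0 \<Longrightarrow> b $ j = 0"
    and tight: "(\<Sum>k\<in>UNIV. \<bar>Th $ j $ k\<bar>) = bp $ j + bm $ j \<Longrightarrow> a $ j + b $ j = 0"
    and tie: "0 < bp $ j \<Longrightarrow> bp $ j = bm $ j \<Longrightarrow> a $ j = b $ j"
    using v by (auto simp: tied_space_def pattern_space_def active_pattern_def)
  consider "bp $ j = 0" "bm $ j = 0" | "0 < bp $ j" "bm $ j = 0" | "bp $ j = 0" "0 < bm $ j"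
    | "0 < bp $ j" "0 < bm $ j"
    using nonneg by fastforce
  then show ?thesis
  proof cases
    case 4
    then have "a $ j + b $ j = 0"
      using tight shl_solution_hierarchy_tight[OF sol lam] by blast
    moreover have "a $ j = b $ j"
      using 4 tie net by (cases "bp $ j = bm $ j") auto
    ultimately show ?thesis by simp
  qed (use a0 b0 tight net in \<open>fastforce+\<close>)
qed

definition net_coords :: "'p set \<Rightarrow> ('p \<times> 'p) set \<Rightarrow> ('p::finite) phi \<Rightarrow> real^('p + 'p \<times> 'p)" where
  "net_coords B A v = (case v of (a, b, C, D) \<Rightarrow> \<chi> i. case i of
       Inl j \<Rightarrow> if j \<in> B then a $ j - b $ j else 0
     | Inr (j, k) \<Rightarrow> if (j, k) \<in> A then C $ j $ k - D $ j $ k else 0)"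

lemma linear_net_coords:
  fixes B :: "'p::finite set"
  shows "linear (net_coords B A)"
proof (rule linearI)
  fix u v :: "'p::finite phi" and c :: real
  show "net_coords B A (u + v) = net_coords B A u + net_coords B A v"
    by (cases u; cases v) (simp add: net_coords_def vec_eq_iff split: sum.split prod.split)
  show "net_coords B A (c *\<^sub>R u) = c *\<^sub>R net_coords B A u"
    by (cases u) (simp add: net_coords_def vec_eq_iff algebra_simps split: sum.split prod.split)
qed

lemma dim_le_card_support:
  fixes S :: "(real^'i) set"
  assumes "\<And>x i. x \<in> S \<Longrightarrow> i \<notin> I \<Longrightarrow> x $ i = 0"
  shows "dim S \<le> card I"
proof -
  have "dim S \<le> dim {x :: real^'i. \<forall>i. i \<notin> I \<longrightarrow> x $ i = 0}"
    using assms by (intro dim_subset) blast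
  also have "\<dots> = card I"
    using dim_substandard_cart by (simp add: dim_vec_eq[symmetric])
  finally show ?thesis .
qed

lemma dim_tied_space_le:
  fixes X :: "real^'p::{finite,linorder}^'n"
  assumes sol: "shl_solution X y lam bp bm Th" and lam: "lam > 0"
  defines "B \<equiv> {j. bp $ j - bm $ j \<noteq> 0} - ({j. (\<Sum>k\<in>UNIV. \<bar>Th $ j $ k\<bar>) = bp $ j + bm $ j}
                   \<inter> (({j. bp $ j > 0} - {j. bm $ j > 0}) \<union> ({j. bm $ j > 0} - {j. bp $ j > 0})))"
    and "A \<equiv> {(j, k). Th $ j $ k \<noteq> 0 \<and> j < k}"
  shows "dim (tied_space (active_pattern bp bm Th)) \<le> card B + card A"
proof -
  let ?U = "tied_space (active_pattern bp bm Th)"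
  have feas: "shl_feasible bp bm Th"
    using sol by (simp add: shl_solution_def)
  have "v = 0" if v: "v \<in> ?U" and net: "net_coords B A v = 0" for v
  proof -
    obtain a b C D where v_eq: "v = (a, b, C, D)"
      by (cases v)
    have Theta_net: "C $ j $ k = D $ j $ k" if "Th $ j $ k \<noteq> 0" "j < k" for j k
      using arg_cong[OF net, of "\<lambda>x. x $ Inr (j, k)"] that by (simp add: v_eq net_coords_def A_def)
    have "C = 0" "D = 0"
      using tied_space_Theta_eq_0[OF feas v[unfolded v_eq] Theta_net] by (simp_all add: vec_eq_iff)
    have beta_net: "a $ j = b $ j"
      if "bp $ j \<noteq> bm $ j"
        "(\<Sum>k\<in>UNIV. \<bar>Th $ j $ k\<bar>) = bp $ j + bm $ j \<longrightarrow> (0 < bp $ j \<longleftrightarrow> 0 < bm $ j)" for j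
      using arg_cong[OF net, of "\<lambda>x. x $ Inl j"] that by (auto simp: v_eq net_coords_def B_def)
    have "(a, b, 0, 0) \<in> tied_space (active_pattern bp bm Th)"
      using v by (simp add: v_eq \<open>C = 0\<close> \<open>D = 0\<close>)
    then have "a $ j = 0 \<and> b $ j = 0" for j
      by (rule tied_space_beta_eq_0[OF sol lam _ beta_net])
    then have "a = 0" "b = 0"
      by (simp_all add: vec_eq_iff)
    with \<open>C = 0\<close> \<open>D = 0\<close> show ?thesis
      by (simp add: v_eq zero_prod_def)
  qed
  then have "inj_on (net_coords B A) (span ?U)"
    by (simp add: span_eq_iff[THEN iffD2, OF subspace_tied_space]
        linear_inj_on_iff_eq_0[OF linear_net_coords subspace_tied_space])
  then have "dim ?U = dim (net_coords B A ` ?U)"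
    using dim_image_eq[OF linear_net_coords] by metis
  also have "\<dots> \<le> card (Inl ` B \<union> Inr ` A)"
    by (rule dim_le_card_support) (auto simp: net_coords_def split: prod.splits sum.split)
  also have "\<dots> = card B + card A"
    by (subst card_Un_disjoint) (auto simp: card_image)
  finally show ?thesis .
qed

lemma orth_proj_mem:
  fixes V :: "'a::euclidean_space set"
  assumes V: "subspace V"
  shows "orth_proj V v \<in> V"
proof -
  have span_V: "span V = V"
    using V by (simp add: span_eq_iff)
  obtain p z where p: "p \<in> V" and z: "\<And>w. w \<in> V \<Longrightarrow> inner z w = 0" and decomp: "v = p + z"
    using orthogonal_subspace_decomp_exists[of V v] span_V by (auto simp: orthogonal_def)
  have uniq: "\<exists>!w. w \<in> V \<and> (\<forall>u\<in>V. inner (v - w) u = 0)"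
  proof (rule ex1I[of _ p])
    show "p \<in> V \<and> (\<forall>u\<in>V. inner (v - p) u = 0)"
      using p z decomp by simp
  next
    fix w assume w: "w \<in> V \<and> (\<forall>u\<in>V. inner (v - w) u = 0)"
    then have "p - w \<in> V"
      using p V subspace_diff by blast
    then have "inner (p - w) (p - w) = inner (v - w) (p - w) - inner z (p - w)"
      using decomp by (simp add: inner_diff_left inner_add_left)
    also have "\<dots> = 0"
      using w z \<open>p - w \<in> V\<close> by simp
    finally show "w = p" by simp
  qed
  show ?thesis
    unfolding orth_proj_def using theI'[OF uniq] by blast
qed

lemma shl_df_le:
  fixes X :: "real^'p::{finite,linorder}^'n"
  assumes sol: "shl_solution X y lam bp bm Th" and lam: "lam > 0"
    and y: "y \<notin> exceptional_set X lam (active_pattern bp bm Th)"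
  shows "int (dim (range (\<lambda>v. Xtilde X (orth_proj (active_space (phi_of bp bm Th)) v))))
         \<le> int (card {j. bp $ j - bm $ j \<noteq> 0})
           + int (card {(j, k). Th $ j $ k \<noteq> 0 \<and> j < k})
           - int (card ({j. (\<Sum>k\<in>UNIV. \<bar>Th $ j $ k\<bar>) = bp $ j + bm $ j}
                   \<inter> (({j. bp $ j > 0} - {j. bm $ j > 0}) \<union> ({j. bm $ j > 0} - {j. bp $ j > 0}))))"
proof -
  define pt where "pt = active_pattern bp bm Th"
  define T where "T = {j. (\<Sum>k\<in>UNIV. \<bar>Th $ j $ k\<bar>) = bp $ j + bm $ j}
                   \<inter> (({j. bp $ j > 0} - {j. bm $ j > 0}) \<union> ({j. bm $ j > 0} - {j. bp $ j > 0}))"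
  define B where "B = {j. bp $ j - bm $ j \<noteq> 0}"
  have T_sub: "T \<subseteq> B"
    by (auto simp: T_def B_def)
  have "range (\<lambda>v. Xtilde X (orth_proj (active_space (phi_of bp bm Th)) v)) \<subseteq> Xtilde X ` pattern_space pt"
    using orth_proj_mem[OF subspace_pattern_space]
    unfolding active_space_eq_pattern_space pt_def by blast
  also have "\<dots> \<subseteq> Xtilde X ` tied_space pt"
    using image_pattern_space_subset[OF sol y] by (simp add: pt_def)
  finally have "dim (range (\<lambda>v. Xtilde X (orth_proj (active_space (phi_of bp bm Th)) v)))
      \<le> dim (Xtilde X ` tied_space pt)"
    by (rule dim_subset)
  also have "\<dots> \<le> dim (tied_space pt)"
    by (rule dim_image_le[OF linear_Xtilde])
  also have "\<dots> \<le> card (B - T) + card {(j, k). Th $ j $ k \<noteq> 0 \<and> j < k}"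
    using dim_tied_space_le[OF sol lam] by (simp add: pt_def B_def T_def)
  also have "card (B - T) = card B - card T"
    using T_sub by (simp add: card_Diff_subset finite_subset)
  finally show ?thesis
    using card_mono[OF _ T_sub] by (simp add: B_def T_def)
qed

lemma hyperplane_null_sets:
  fixes g :: "'a::euclidean_space"
  assumes "g \<noteq> 0"
  shows "{y. inner g y = c} \<in> null_sets lborel"
proof -
  have "negligible {y. inner g y = c}"
    using assms by (intro negligible_hyperplane) simp
  then have "{y. inner g y = c} \<in> null_sets lebesgue"
    by (simp add: negligible_iff_null_sets)
  then show ?thesis
    using closed_hyperplane null_sets_completion_iff by (metis borel_closed sets_lborel)
qed

lemma exceptional_set_null_sets: "exceptional_set X lam pt \<in> null_sets lborel"
proof (cases "\<exists>w. separating_direction X pt w")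
  case True
  define w where "w = (SOME w. separating_direction X pt w)"
  have "separating_direction X pt w"
    using True unfolding w_def by (rule someI_ex)
  with True show ?thesis
    by (simp add: exceptional_set_def Let_def w_def[symmetric] separating_direction_def
        hyperplane_null_sets)
qed (simp add: exceptional_set_def)

lemma AE_gauss_law_of_null:
  fixes mu :: "real^'n" and N :: "(real^'n) set"
  assumes "N \<in> null_sets lborel" and "\<And>y. y \<notin> N \<Longrightarrow> P y"
  shows "AE y in gauss_law mu sg. P y"
proof -
  have "AE y in lborel. P y"
    using assms by (intro AE_I'[of N]) auto
  moreover have "(\<lambda>y. ennreal (\<Prod>i\<in>UNIV. normal_density (mu $ i) sg (y $ i)))
      \<in> borel_measurable lborel"
    by measurable
  ultimately show ?thesis
    unfolding gauss_law_def by (subst AE_density) (auto elim: AE_mp)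
qed

theorem mainTheorem6:
  fixes X :: "real^'p::{finite,linorder}^'n" and lam sg :: real and mu :: "real^'n"
  assumes "lam > 0" and "sg > 0"
  shows "AE y in gauss_law mu sg.
     \<forall>bp bm Th. shl_solution X y lam bp bm Th \<longrightarrow>
       int (dim (range (\<lambda>v. Xtilde X (orth_proj (active_space (phi_of bp bm Th)) v))))
         \<le> int (card {j. bp $ j - bm $ j \<noteq> 0})
           + int (card {(j, k). Th $ j $ k \<noteq> 0 \<and> j < k})
           - int (card ({j. (\<Sum>k\<in>UNIV. \<bar>Th $ j $ k\<bar>) = bp $ j + bm $ j}
                   \<inter> (({j. bp $ j > 0} - {j. bm $ j > 0}) \<union> ({j. bm $ j > 0} - {j. bp $ j > 0}))))"
proof (rule AE_gauss_law_of_null)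
  show "(\<Union>pt. exceptional_set X lam pt) \<in> null_sets lborel"
    by (intro null_sets.finite_UN) (simp_all add: exceptional_set_null_sets)
qed (use shl_df_le[OF _ assms(1)] in blast)

end
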